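(* Let $n\ge2$, $t_1<\dots<t_n$, and for $j=1,\dots,n-1$ let $\lambda_{0,j}\le\lambda_{1,j}$ be real. For $f\in C^2[t_1,t_n]$ let $I_2(f)$ be the continuous function on $[t_1,t_n]$ whose restriction to each $[t_j,t_{j+1}]$ lies in $E(\lambda_{0,j},\lambda_{1,j})$ and which satisfies $I_2(f)(t_j)=f(t_j)$ for $j=1,\dots,n$. Then $$\|f-I_2(f)\|_{[t_1,t_n]}\le\max_{1\le j\le n-1}M^{t_j,t_{j+1}}_{\lambda_{0,j},\lambda_{1,j}}\cdot\max_{1\le j\le n-1}\max_{\theta\in[t_j,t_{j+1}]}\left|L_{(\lambda_{0,j},\lambda_{1,j})}f(\theta)\right|.$$
   Context: $\|g\|_{[a,b]}=\max_{t\in[a,b]}|g(t)|$. For real $\lambda_0,\dots,\lambda_N$, $L_{(\lambda_0,\dots,\lambda_N)}=\prod_{j=0}^N(\frac{d}{dt}-\lambda_j)$ and $E(\lambda_0,\dots,\lambda_N)=\{f\in C^{N+1}(\mathbb{R}):L_{(\lambda_0,\dots,\lambda_N)}f=0\}$. For real $\mu_0,\mu_1$ and $a<b$, $\Omega^{a,b}_{\mu_0,\mu_1,0}$ denotes the unique $u\in E(\mu_0,\mu_1,0)$ with $u(a)=u(b)=0$ and $L_{(\mu_0,\mu_1)}u\equiv-1$, and $M^{a,b}_{\mu_0,\mu_1}:=\max_{t\in[a,b]}|\Omega^{a,b}_{\mu_0,\mu_1,0}(t)|$. *)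

theory Defs
  imports "HOL-Analysis.Analysis"
begin

definition supnorm_on :: "real \<Rightarrow> real \<Rightarrow> (real \<Rightarrow> real) \<Rightarrow> real" where
  "supnorm_on a b g = Sup ((\<lambda>t. \<bar>g t\<bar>) ` {a..b})"

definition Dop :: "real \<Rightarrow> (real \<Rightarrow> real) \<Rightarrow> (real \<Rightarrow> real)" where
  "Dop lam g = (\<lambda>t. deriv g t - lam * g t)"

definition Lop :: "real list \<Rightarrow> (real \<Rightarrow> real) \<Rightarrow> (real \<Rightarrow> real)" where
  "Lop lams f = foldr Dop lams f"

definition Ck :: "nat \<Rightarrow> (real \<Rightarrow> real) \<Rightarrow> bool" where
  "Ck k f \<longleftrightarrow> (\<forall>j<k. \<forall>x. (deriv ^^ j) f differentiable (at x)) \<and> continuous_on UNIV ((deriv ^^ k) f)"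

definition Espace :: "real list \<Rightarrow> (real \<Rightarrow> real) set" where
  "Espace lams = {f. Ck (length lams) f \<and> (\<forall>t. Lop lams f t = 0)}"

definition Omega :: "real \<Rightarrow> real \<Rightarrow> real \<Rightarrow> real \<Rightarrow> (real \<Rightarrow> real)" where
  "Omega a b mu0 mu1 = (THE u. u \<in> Espace [mu0, mu1, 0] \<and> u a = 0 \<and> u b = 0 \<and>
                                 (\<forall>t. Lop [mu0, mu1] u t = -1))"

definition Mconst :: "real \<Rightarrow> real \<Rightarrow> real \<Rightarrow> real \<Rightarrow> real" where
  "Mconst a b mu0 mu1 = supnorm_on a b (Omega a b mu0 mu1)"

text \<open>\<open>L_(\<lambda>_0,\<lambda>_1) f = f'' - (\<lambda>_0+\<lambda>_1) f' + \<lambda>_0\<lambda>_1 f\<close> for a function given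
  on an interval together with its first and second derivatives \<open>f'\<close>, \<open>f''\<close>.\<close>
definition L2 :: "real \<Rightarrow> real \<Rightarrow> (real \<Rightarrow> real) \<Rightarrow> (real \<Rightarrow> real) \<Rightarrow> (real \<Rightarrow> real) \<Rightarrow> real \<Rightarrow> real" where
  "L2 lam0 lam1 f f' f'' t = f'' t - (lam0 + lam1) * f' t + lam0 * lam1 * f t"

end

theory Submission
  imports Defs
begin

text \<open>Because \<open>L = (D - \<lambda>\<^sub>0)(D - \<lambda>\<^sub>1)\<close> factors through the integrating factors
  \<open>exp (-\<lambda>\<^sub>0 t)\<close> and \<open>exp (-\<lambda>\<^sub>1 t)\<close>, two applications of the mean value theorem give a
  maximum principle on every interval, for all real \<open>\<lambda>\<^sub>0, \<lambda>\<^sub>1\<close>: \<open>L w \<le> 0\<close> and \<open>w \<ge> 0\<close> at the end points force \<open>w \<ge> 0\<close>.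
  It makes \<open>\<Omega>\<close> unique (its existence comes from an explicit fundamental system), and on a piece
  \<open>[t\<^sub>j, t\<^sub>j\<^sub>+\<^sub>1]\<close> with \<open>K = \<parallel>L f\<parallel>\<close> it applies to \<open>K \<Omega> \<plusminus> (f - I\<^sub>2 f)\<close>, which vanish at the end
  points and have \<open>L = -K \<plusminus> L f \<le> 0\<close>. Hence \<open>|f - I\<^sub>2 f| \<le> K \<Omega> \<le> K M\<close> on every piece.\<close>

lemma deriv_fun_eqI:
  "(\<And>x. (u has_real_derivative u' x) (at x)) \<Longrightarrow> deriv u = u'"
  by (rule ext, rule DERIV_imp_deriv) auto

lemma Lop_pair_eq_L2:
  assumes "\<And>x. (u has_real_derivative u1 x) (at x)"
    and "\<And>x. (u1 has_real_derivative u2 x) (at x)"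
  shows "Lop [l0, l1] u = L2 l0 l1 u u1 u2"
proof -
  have "deriv u = u1"
    using assms(1) by (rule deriv_fun_eqI)
  moreover have "deriv (\<lambda>t. u1 t - l1 * u t) = (\<lambda>t. u2 t - l1 * u1 t)"
    by (rule deriv_fun_eqI) (auto intro!: derivative_eq_intros assms)
  ultimately show ?thesis
    by (intro ext) (simp add: Lop_def Dop_def L2_def algebra_simps)
qed

lemma Lop_pair_zero_eq_L2:
  assumes "\<And>x. (u has_real_derivative u1 x) (at x)"
    and "\<And>x. (u1 has_real_derivative u2 x) (at x)"
    and "\<And>x. (u2 has_real_derivative u3 x) (at x)"
  shows "Lop [l0, l1, 0] u = L2 l0 l1 u1 u2 u3"
proof -
  have "Dop 0 u = u1"
    using deriv_fun_eqI[OF assms(1)] by (simp add: Dop_def)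
  then show ?thesis
    using Lop_pair_eq_L2[OF assms(2,3)] by (simp add: Lop_def)
qed

lemma Ck_has_real_derivatives:
  assumes "Ck k u" "2 \<le> k"
  shows "(u has_real_derivative deriv u x) (at x)"
    and "(deriv u has_real_derivative deriv (deriv u) x) (at x)"
proof -
  have "(deriv ^^ j) u differentiable (at x)" if "j < k" for j
    using assms(1) that by (simp add: Ck_def)
  from this[of 0] this[of 1] assms(2)
  have "u differentiable (at x)" "deriv u differentiable (at x)"
    by auto
  then show "(u has_real_derivative deriv u x) (at x)"
    and "(deriv u has_real_derivative deriv (deriv u) x) (at x)"
    by (simp_all add: DERIV_deriv_iff_real_differentiable)
qed

lemma Espace_pair_L2:
  assumes "u \<in> Espace [l0, l1]"
  shows "(u has_real_derivative deriv u x) (at x)"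
    and "(deriv u has_real_derivative deriv (deriv u) x) (at x)"
    and "L2 l0 l1 u (deriv u) (deriv (deriv u)) x = 0"
proof -
  have "Ck 2 u" and L: "Lop [l0, l1] u x = 0"
    using assms by (auto simp: Espace_def numeral_2_eq_2)
  then show d: "(u has_real_derivative deriv u x) (at x)"
    and "(deriv u has_real_derivative deriv (deriv u) x) (at x)"
    using Ck_has_real_derivatives by auto
  show "L2 l0 l1 u (deriv u) (deriv (deriv u)) x = 0"
    using L Lop_pair_eq_L2[OF Ck_has_real_derivatives[OF \<open>Ck 2 u\<close>]] by simp
qed

lemma mvt_has_real_derivative_within:
  fixes h :: "real \<Rightarrow> real"
  assumes "a < b"
    and "\<And>x. a \<le> x \<Longrightarrow> x \<le> b \<Longrightarrow> (h has_real_derivative h' x) (at x within {a..b})"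
  obtains c where "c \<in> {a<..<b}" "h b - h a = h' c * (b - a)"
proof -
  have "\<exists>c\<in>{a<..<b}. h b - h a = (\<lambda>x. h' c * x) (b - a)"
    by (rule mvt_simple[OF assms(1)])
      (use assms(2) in \<open>auto simp: has_field_derivative_def mult_commute_abs\<close>)
  then show ?thesis
    using that by auto
qed

lemma has_real_derivative_exp_factor:
  assumes "(w has_real_derivative w1 y) (at y within S)"
  shows "((\<lambda>t. w t * exp (- l * t)) has_real_derivative
           (w1 y - l * w y) * exp (- l * y)) (at y within S)"
  by (auto intro!: derivative_eq_intros assms simp: algebra_simps)

lemma L2_exp_factor_derivative:
  assumes "(w has_real_derivative w1 y) (at y within S)"
    and "(w1 has_real_derivative w2 y) (at y within S)"
  shows "((\<lambda>t. (w1 t - l1 * w t) * exp (- l0 * t)) has_real_derivative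
           L2 l0 l1 w w1 w2 y * exp (- l0 * y)) (at y within S)"
proof -
  have "((\<lambda>t. (w1 t - l1 * w t) * exp (- l0 * t)) has_real_derivative
      (w2 y - l1 * w1 y - l0 * (w1 y - l1 * w y)) * exp (- l0 * y)) (at y within S)"
    by (rule has_real_derivative_exp_factor) (auto intro!: derivative_eq_intros assms)
  then show ?thesis
    by (simp add: L2_def algebra_simps)
qed

lemma L2_eq_0_boundary_zero_imp_zero:
  assumes d0: "\<And>x. (w has_real_derivative w1 x) (at x)"
    and d1: "\<And>x. (w1 has_real_derivative w2 x) (at x)"
    and L: "\<And>x. L2 l0 l1 w w1 w2 x = 0"
    and ab: "a < b" and wa: "w a = 0" and wb: "w b = 0"
  shows "w x = 0"
proof -
  define z where "z t = w1 t - l1 * w t" for t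
  define h where "h t = w t * exp (- l1 * t)" for t
  define k where "k t = z t * exp (- l0 * t)" for t
  have dh: "(h has_real_derivative z y * exp (- l1 * y)) (at y)" for y
    unfolding h_def z_def by (rule has_real_derivative_exp_factor) (rule d0)
  have "(k has_real_derivative L2 l0 l1 w w1 w2 y * exp (- l0 * y)) (at y)" for y
    unfolding k_def z_def by (rule L2_exp_factor_derivative; rule d0 d1)
  then have "(k has_real_derivative 0) (at y)" for y
    using L by simp
  then have k_const: "k s = k c" for s c
    using DERIV_isconst_all by blast
  have "(h has_real_derivative z y * exp (- l1 * y)) (at y within {a..b})" for y
    using dh by (rule has_field_derivative_at_within)
  then obtain c where "c \<in> {a<..<b}" "h b - h a = z c * exp (- l1 * c) * (b - a)"
    by (rule mvt_has_real_derivative_within[OF ab])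
  then have "z c = 0"
    using ab wa wb by (simp add: h_def)
  then have "z s = 0" for s
    using k_const[of s c] by (simp add: k_def)
  then have "(h has_real_derivative 0) (at y)" for y
    using dh[of y] by simp
  then have "h x = h a"
    using DERIV_isconst_all by blast
  then show ?thesis
    by (simp add: h_def wa)
qed

text \<open>If \<open>w\<close> had a negative value between \<open>a\<close> and \<open>b\<close>, the mean value theorem applied to
  \<open>exp (-\<lambda>\<^sub>1 t) w\<close> would make \<open>w' - \<lambda>\<^sub>1 w\<close> negative before and positive after that point,
  whereas \<open>exp (-\<lambda>\<^sub>0 t) (w' - \<lambda>\<^sub>1 w)\<close> is nonincreasing because \<open>L w \<le> 0\<close>.\<close>
lemma L2_maximum_principle:
  assumes ab: "a < b"
    and d0: "\<And>x. x \<in> {a..b} \<Longrightarrow> (w has_real_derivative w1 x) (at x within {a..b})"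
    and d1: "\<And>x. x \<in> {a..b} \<Longrightarrow> (w1 has_real_derivative w2 x) (at x within {a..b})"
    and L: "\<And>x. x \<in> {a..b} \<Longrightarrow> L2 l0 l1 w w1 w2 x \<le> 0"
    and wa: "w a \<ge> 0" and wb: "w b \<ge> 0" and x: "x \<in> {a..b}"
  shows "w x \<ge> 0"
proof (rule ccontr)
  assume "\<not> w x \<ge> 0"
  then have wx: "w x < 0" by simp
  then have "x \<noteq> a" "x \<noteq> b"
    using wa wb by auto
  then have ax: "a < x" and xb: "x < b"
    using x by auto
  define z where "z t = w1 t - l1 * w t" for t
  define h where "h t = w t * exp (- l1 * t)" for t
  define k where "k t = z t * exp (- l0 * t)" for t
  have d: "(w has_real_derivative w1 y) (at y within {c..d})"
    "(w1 has_real_derivative w2 y) (at y within {c..d})"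
    if "a \<le> c" "d \<le> b" "c \<le> y" "y \<le> d" for c d y
  proof -
    have "{c..d} \<subseteq> {a..b}" "y \<in> {a..b}"
      using that by auto
    then show "(w has_real_derivative w1 y) (at y within {c..d})"
      "(w1 has_real_derivative w2 y) (at y within {c..d})"
      using DERIV_subset d0 d1 by blast+
  qed
  have dh: "(h has_real_derivative z y * exp (- l1 * y)) (at y within {c..d})"
    if "a \<le> c" "d \<le> b" "c \<le> y" "y \<le> d" for c d y
    unfolding h_def z_def by (rule has_real_derivative_exp_factor) (rule d[OF that])
  have dk: "(k has_real_derivative L2 l0 l1 w w1 w2 y * exp (- l0 * y)) (at y within {c..d})"
    if "a \<le> c" "d \<le> b" "c \<le> y" "y \<le> d" for c d y
    unfolding k_def z_def by (rule L2_exp_factor_derivative; rule d[OF that])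
  obtain c1 where c1: "c1 \<in> {a<..<x}" "h x - h a = z c1 * exp (- l1 * c1) * (x - a)"
    by (rule mvt_has_real_derivative_within[OF ax dh]) (use xb in auto)
  obtain c2 where c2: "c2 \<in> {x<..<b}" "h b - h x = z c2 * exp (- l1 * c2) * (b - x)"
    by (rule mvt_has_real_derivative_within[OF xb dh]) (use ax in auto)
  have "h x < 0" "h a \<ge> 0" "h b \<ge> 0"
    using wx wa wb by (simp_all add: h_def mult_neg_pos)
  then have "z c1 * exp (- l1 * c1) * (x - a) < 0" "z c2 * exp (- l1 * c2) * (b - x) > 0"
    using c1 c2 by linarith+
  then have "k c1 < 0" "k c2 > 0"
    using ax xb by (simp_all add: k_def mult_less_0_iff zero_less_mult_iff)
  moreover have c12: "c1 < c2" "a \<le> c1" "c2 \<le> b"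
    using c1 c2 by auto
  obtain c where c: "c \<in> {c1<..<c2}"
    and "k c2 - k c1 = L2 l0 l1 w w1 w2 c * exp (- l0 * c) * (c2 - c1)"
    by (rule mvt_has_real_derivative_within[OF c12(1) dk]) (use c12 in auto)
  moreover have "L2 l0 l1 w w1 w2 c * exp (- l0 * c) * (c2 - c1) \<le> 0"
    using L[of c] c c12 by (simp add: mult_nonpos_nonneg)
  ultimately show False
    by linarith
qed

definition C3_derivs :: "(real \<Rightarrow> real) \<Rightarrow> (real \<Rightarrow> real) \<Rightarrow> (real \<Rightarrow> real) \<Rightarrow> (real \<Rightarrow> real) \<Rightarrow> bool"
  where "C3_derivs u u1 u2 u3 \<longleftrightarrow>
    (\<forall>x. (u has_real_derivative u1 x) (at x)) \<and> (\<forall>x. (u1 has_real_derivative u2 x) (at x)) \<and>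
    (\<forall>x. (u2 has_real_derivative u3 x) (at x)) \<and> continuous_on UNIV u3"

lemma C3_derivs_imp_Ck3:
  assumes "C3_derivs u u1 u2 u3"
  shows "Ck 3 u"
proof -
  have d: "\<And>x. (u has_real_derivative u1 x) (at x)" "\<And>x. (u1 has_real_derivative u2 x) (at x)"
    "\<And>x. (u2 has_real_derivative u3 x) (at x)" and c: "continuous_on UNIV u3"
    using assms by (auto simp: C3_derivs_def)
  have "deriv u = u1" "deriv u1 = u2" "deriv u2 = u3"
    using d by (auto intro: deriv_fun_eqI)
  then have p: "(deriv ^^ 0) u = u" "(deriv ^^ 1) u = u1" "(deriv ^^ 2) u = u2" "(deriv ^^ 3) u = u3"
    by (simp_all add: numeral_3_eq_3 numeral_2_eq_2)
  have "u differentiable (at x)" "u1 differentiable (at x)" "u2 differentiable (at x)" for x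
    using d real_differentiable_def by blast+
  then have "(deriv ^^ j) u differentiable (at x)" if "j < 3" for j x
  proof -
    have "j \<in> {0, 1, 2}"
      using that by auto
    then show ?thesis
      using p \<open>\<And>x. u differentiable (at x)\<close> \<open>\<And>x. u1 differentiable (at x)\<close>
        \<open>\<And>x. u2 differentiable (at x)\<close> by auto
  qed
  then show ?thesis
    using c p by (simp add: Ck_def)
qed

lemma C3_derivs_lincomb:
  assumes "C3_derivs u u1 u2 u3" "C3_derivs v v1 v2 v3"
  shows "C3_derivs (\<lambda>x. u x + c * v x) (\<lambda>x. u1 x + c * v1 x) (\<lambda>x. u2 x + c * v2 x)
    (\<lambda>x. u3 x + c * v3 x)"
  using assms unfolding C3_derivs_def
  by (auto intro!: derivative_eq_intros) (intro continuous_intros)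

lemma C3_derivs_exp:
  "C3_derivs (\<lambda>t. exp (l * t)) (\<lambda>t. l * exp (l * t)) (\<lambda>t. l * (l * exp (l * t)))
    (\<lambda>t. l * (l * (l * exp (l * t))))"
  unfolding C3_derivs_def by (auto intro!: derivative_eq_intros) (intro continuous_intros)

lemma C3_derivs_times_exp:
  "C3_derivs (\<lambda>t. t * exp (l * t)) (\<lambda>t. exp (l * t) + l * t * exp (l * t))
    (\<lambda>t. 2 * l * exp (l * t) + l * l * t * exp (l * t))
    (\<lambda>t. 3 * l * l * exp (l * t) + l * l * l * t * exp (l * t))"
  unfolding C3_derivs_def
  by (auto intro!: derivative_eq_intros simp: algebra_simps) (intro continuous_intros)

lemma C3_derivs_quadratic:
  "C3_derivs (\<lambda>t. c0 + c1 * t + c2 * (t * t)) (\<lambda>t. c1 + 2 * c2 * t) (\<lambda>t. 2 * c2) (\<lambda>t. 0)"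
  unfolding C3_derivs_def by (auto intro!: derivative_eq_intros simp: algebra_simps)

definition is_Omega :: "real \<Rightarrow> real \<Rightarrow> real \<Rightarrow> real \<Rightarrow> (real \<Rightarrow> real) \<Rightarrow> bool" where
  "is_Omega a b l0 l1 u \<longleftrightarrow>
    u \<in> Espace [l0, l1, 0] \<and> u a = 0 \<and> u b = 0 \<and> (\<forall>t. Lop [l0, l1] u t = -1)"

lemma is_OmegaI:
  assumes C3: "C3_derivs u u1 u2 u3" and L: "\<And>x. L2 l0 l1 u u1 u2 x = -1"
    and "u a = 0" "u b = 0"
  shows "is_Omega a b l0 l1 u"
proof -
  have d: "\<And>x. (u has_real_derivative u1 x) (at x)" "\<And>x. (u1 has_real_derivative u2 x) (at x)"
    "\<And>x. (u2 has_real_derivative u3 x) (at x)"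
    using C3 by (auto simp: C3_derivs_def)
  have "L2 l0 l1 u1 u2 u3 x = 0" for x
  proof -
    have "(L2 l0 l1 u u1 u2 has_real_derivative L2 l0 l1 u1 u2 u3 x) (at x)"
      unfolding L2_def by (auto intro!: derivative_eq_intros d)
    moreover have "L2 l0 l1 u u1 u2 = (\<lambda>x. -1)"
      using L by auto
    ultimately have "((\<lambda>x. -1) has_real_derivative L2 l0 l1 u1 u2 u3 x) (at x)"
      by simp
    from DERIV_unique[OF this DERIV_const] show ?thesis .
  qed
  then show ?thesis
    using assms C3_derivs_imp_Ck3[OF C3] Lop_pair_zero_eq_L2[OF d] Lop_pair_eq_L2[OF d(1,2)]
    by (simp add: is_Omega_def Espace_def numeral_3_eq_3)
qed

lemma L2_fundamental_pair:
  obtains y y1 y2 y3 r r1 r2 r3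
  where "C3_derivs y y1 y2 y3" "C3_derivs r r1 r2 r3"
    "\<And>x. L2 l0 l1 y y1 y2 x = 0" "\<And>x. L2 l0 l1 r r1 r2 x = 0"
    "\<And>a b. a < b \<Longrightarrow> y a * r b - y b * r a \<noteq> 0"
proof (cases "l0 = l1")
  case True
  show ?thesis
  proof (rule that[OF C3_derivs_exp[of l0] C3_derivs_times_exp[of l0]])
    fix a b :: real
    assume "a < b"
    have "exp (l0 * a) * (b * exp (l0 * b)) - exp (l0 * b) * (a * exp (l0 * a))
      = exp (l0 * a) * exp (l0 * b) * (b - a)"
      by (simp add: algebra_simps)
    then show "exp (l0 * a) * (b * exp (l0 * b)) - exp (l0 * b) * (a * exp (l0 * a)) \<noteq> 0"
      using \<open>a < b\<close> by simp
  qed (use True in \<open>simp_all add: L2_def algebra_simps\<close>)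
next
  case False
  show ?thesis
  proof (rule that[OF C3_derivs_exp[of l0] C3_derivs_exp[of l1]])
    fix a b :: real
    assume "a < b"
    show "exp (l0 * a) * exp (l1 * b) - exp (l0 * b) * exp (l1 * a) \<noteq> 0"
    proof
      assume "exp (l0 * a) * exp (l1 * b) - exp (l0 * b) * exp (l1 * a) = 0"
      then have "l0 * a + l1 * b = l0 * b + l1 * a"
        by (simp add: exp_add[symmetric])
      then have "(l1 - l0) * (b - a) = 0"
        by (simp add: algebra_simps)
      then show False
        using \<open>a < b\<close> False by simp
    qed
  qed (simp_all add: L2_def algebra_simps)
qed

lemma L2_particular_solution:
  obtains q q1 q2 q3 where "C3_derivs q q1 q2 q3" "\<And>x. L2 l0 l1 q q1 q2 x = -1"
proof -
  consider "l0 * l1 \<noteq> 0" | "l0 * l1 = 0" "l0 + l1 \<noteq> 0" | "l0 * l1 = 0" "l0 + l1 = 0"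
    by blast
  then show ?thesis
  proof cases
    case 1
    then show ?thesis
      by (intro that[OF C3_derivs_quadratic[of "-1 / (l0 * l1)" 0 0]]) (simp add: L2_def)
  next
    case 2
    then show ?thesis
      by (intro that[OF C3_derivs_quadratic[of 0 "1 / (l0 + l1)" 0]]) (simp add: L2_def)
  next
    case 3
    then show ?thesis
      by (intro that[OF C3_derivs_quadratic[of 0 0 "-1 / 2"]]) (simp add: L2_def)
  qed
qed

text \<open>\<open>\<Omega>\<close> is a particular solution of \<open>L u = -1\<close> corrected by the fundamental pair, whose
  Wronskian-type determinant at \<open>a, b\<close> does not vanish.\<close>
lemma is_Omega_exists:
  assumes "a < b"
  shows "\<exists>u. is_Omega a b l0 l1 u"
proof -
  obtain y y1 y2 y3 r r1 r2 r3 where Y: "C3_derivs y y1 y2 y3" "\<And>x. L2 l0 l1 y y1 y2 x = 0"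
    and R: "C3_derivs r r1 r2 r3" "\<And>x. L2 l0 l1 r r1 r2 x = 0"
    and det: "y a * r b - y b * r a \<noteq> 0"
    using L2_fundamental_pair[of l0 l1] assms by metis
  obtain q q1 q2 q3 where Q: "C3_derivs q q1 q2 q3" "\<And>x. L2 l0 l1 q q1 q2 x = -1"
    using L2_particular_solution by metis
  define D where "D = y a * r b - y b * r a"
  define A where "A = (r a * q b - q a * r b) / D"
  define C where "C = (y b * q a - y a * q b) / D"
  have C3: "C3_derivs (\<lambda>x. q x + A * y x + C * r x) (\<lambda>x. q1 x + A * y1 x + C * r1 x)
      (\<lambda>x. q2 x + A * y2 x + C * r2 x) (\<lambda>x. q3 x + A * y3 x + C * r3 x)"
    by (intro C3_derivs_lincomb Q Y R)
  have "L2 l0 l1 (\<lambda>x. q x + A * y x + C * r x) (\<lambda>x. q1 x + A * y1 x + C * r1 x)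
      (\<lambda>x. q2 x + A * y2 x + C * r2 x) x
    = L2 l0 l1 q q1 q2 x + A * L2 l0 l1 y y1 y2 x + C * L2 l0 l1 r r1 r2 x" for x
    by (simp add: L2_def algebra_simps)
  moreover have "q a + A * y a + C * r a = 0" "q b + A * y b + C * r b = 0"
    using det by (simp_all add: A_def C_def D_def field_simps)
  ultimately have "is_Omega a b l0 l1 (\<lambda>x. q x + A * y x + C * r x)"
    using Q(2) Y(2) R(2) by (intro is_OmegaI[OF C3]) simp_all
  then show ?thesis
    by blast
qed

lemma is_Omega_L2:
  assumes "is_Omega a b l0 l1 u"
  shows "(u has_real_derivative deriv u x) (at x)"
    and "(deriv u has_real_derivative deriv (deriv u) x) (at x)"
    and "L2 l0 l1 u (deriv u) (deriv (deriv u)) x = -1"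
proof -
  have "Ck 3 u" and L: "Lop [l0, l1] u x = -1"
    using assms by (auto simp: is_Omega_def Espace_def numeral_3_eq_3)
  then show "(u has_real_derivative deriv u x) (at x)"
    and "(deriv u has_real_derivative deriv (deriv u) x) (at x)"
    using Ck_has_real_derivatives by auto
  show "L2 l0 l1 u (deriv u) (deriv (deriv u)) x = -1"
    using L Lop_pair_eq_L2[OF Ck_has_real_derivatives[OF \<open>Ck 3 u\<close>]] by simp
qed

lemma is_Omega_unique:
  assumes ab: "a < b" and u: "is_Omega a b l0 l1 u" and v: "is_Omega a b l0 l1 v"
  shows "u = v"
proof
  fix x
  note U = is_Omega_L2[OF u] and V = is_Omega_L2[OF v]
  have "L2 l0 l1 (\<lambda>x. u x - v x) (\<lambda>x. deriv u x - deriv v x)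
      (\<lambda>x. deriv (deriv u) x - deriv (deriv v) x) y
    = L2 l0 l1 u (deriv u) (deriv (deriv u)) y - L2 l0 l1 v (deriv v) (deriv (deriv v)) y" for y
    by (simp add: L2_def algebra_simps)
  then have L: "L2 l0 l1 (\<lambda>x. u x - v x) (\<lambda>x. deriv u x - deriv v x)
      (\<lambda>x. deriv (deriv u) x - deriv (deriv v) x) y = 0" for y
    using U(3) V(3) by simp
  have boundary: "u a = 0" "u b = 0" "v a = 0" "v b = 0"
    using u v by (simp_all add: is_Omega_def)
  have "u x - v x = 0"
    by (rule L2_eq_0_boundary_zero_imp_zero[of "\<lambda>x. u x - v x" "\<lambda>x. deriv u x - deriv v x"
          "\<lambda>x. deriv (deriv u) x - deriv (deriv v) x" l0 l1 a b, OF _ _ L ab])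
      (use boundary in \<open>auto intro!: derivative_eq_intros U V\<close>)
  then show "u x = v x"
    by simp
qed

lemma is_Omega_Omega:
  assumes "a < b"
  shows "is_Omega a b l0 l1 (Omega a b l0 l1)"
proof -
  obtain u where u: "is_Omega a b l0 l1 u"
    using is_Omega_exists[OF assms] by blast
  have "\<exists>!u. is_Omega a b l0 l1 u"
    using u is_Omega_unique[OF assms _ u] by (rule ex1I)
  then have "is_Omega a b l0 l1 (THE u. is_Omega a b l0 l1 u)"
    by (rule theI')
  then show ?thesis
    by (simp add: Omega_def is_Omega_def)
qed

lemma continuous_on_Omega:
  assumes "a < b"
  shows "continuous_on S (Omega a b l0 l1)"
proof -
  have "isCont (Omega a b l0 l1) x" for x
    using DERIV_isCont is_Omega_L2(1)[OF is_Omega_Omega[OF assms]] .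
  then show ?thesis
    by (simp add: continuous_at_imp_continuous_on)
qed

lemma bdd_above_abs_image_interval:
  fixes h :: "real \<Rightarrow> real"
  assumes "continuous_on {a..b} h"
  shows "bdd_above ((\<lambda>t. \<bar>h t\<bar>) ` {a..b})"
proof -
  have "compact ((\<lambda>t. \<bar>h t\<bar>) ` {a..b})"
    by (intro compact_continuous_image continuous_intros assms compact_Icc)
  then show ?thesis
    by (simp add: bounded_imp_bdd_above compact_imp_bounded)
qed

lemma supnorm_on_upper:
  assumes "continuous_on {a..b} h" "x \<in> {a..b}"
  shows "\<bar>h x\<bar> \<le> supnorm_on a b h"
  unfolding supnorm_on_def
  by (rule cSup_upper[OF _ bdd_above_abs_image_interval[OF assms(1)]]) (use assms(2) in auto)

lemma supnorm_on_nonneg: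
  assumes "a \<le> b" "continuous_on {a..b} h"
  shows "0 \<le> supnorm_on a b h"
  using supnorm_on_upper[OF assms(2), of a] assms(1) by force

lemma supnorm_on_least:
  assumes "a \<le> b" "\<And>x. x \<in> {a..b} \<Longrightarrow> \<bar>h x\<bar> \<le> B"
  shows "supnorm_on a b h \<le> B"
  unfolding supnorm_on_def by (rule cSup_least) (use assms in auto)

lemma Mconst_nonneg:
  assumes "a < b"
  shows "0 \<le> Mconst a b l0 l1"
  unfolding Mconst_def using assms by (intro supnorm_on_nonneg continuous_on_Omega) auto

lemma continuous_on_L2:
  assumes "\<And>x. x \<in> S \<Longrightarrow> (f has_real_derivative f' x) (at x within S)"
    and "\<And>x. x \<in> S \<Longrightarrow> (f' has_real_derivative f'' x) (at x within S)"
    and "continuous_on S f''"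
  shows "continuous_on S (L2 l0 l1 f f' f'')"
proof -
  have "continuous_on S f" "continuous_on S f'"
    unfolding continuous_on_eq_continuous_within using assms(1,2) DERIV_continuous by blast+
  then show ?thesis
    unfolding L2_def by (intro continuous_intros assms(3))
qed

lemma interpolation_error_le_Mconst:
  assumes ab: "a < b" and S: "{a..b} \<subseteq> S"
    and f_d1: "\<And>x. x \<in> S \<Longrightarrow> (f has_real_derivative f' x) (at x within S)"
    and f_d2: "\<And>x. x \<in> S \<Longrightarrow> (f' has_real_derivative f'' x) (at x within S)"
    and f_C2: "continuous_on S f''"
    and u: "u \<in> Espace [l0, l1]" and ua: "u a = f a" and ub: "u b = f b"
    and x: "x \<in> {a..b}"
  shows "\<bar>f x - u x\<bar> \<le> Mconst a b l0 l1 * supnorm_on a b (L2 l0 l1 f f' f'')"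
proof -
  have fd1: "(f has_real_derivative f' y) (at y within {a..b})" if "y \<in> {a..b}" for y
    using DERIV_subset f_d1 S that by blast
  have fd2: "(f' has_real_derivative f'' y) (at y within {a..b})" if "y \<in> {a..b}" for y
    using DERIV_subset f_d2 S that by blast
  have cL: "continuous_on {a..b} (L2 l0 l1 f f' f'')"
    using continuous_on_L2[OF f_d1 f_d2 f_C2] S by (rule continuous_on_subset)
  define Om where "Om = Omega a b l0 l1"
  define K where "K = supnorm_on a b (L2 l0 l1 f f' f'')"
  have Om: "is_Omega a b l0 l1 Om"
    unfolding Om_def by (rule is_Omega_Omega[OF ab])
  note O = is_Omega_L2[OF Om] and U = Espace_pair_L2[OF u]
  have signed: "c * (f x - u x) \<le> K * Om x" if c: "c = 1 \<or> c = -1" for c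
  proof -
    have L: "L2 l0 l1 (\<lambda>y. K * Om y - c * (f y - u y)) (\<lambda>y. K * deriv Om y - c * (f' y - deriv u y))
        (\<lambda>y. K * deriv (deriv Om) y - c * (f'' y - deriv (deriv u) y)) y
      = K * L2 l0 l1 Om (deriv Om) (deriv (deriv Om)) y - c * L2 l0 l1 f f' f'' y
        + c * L2 l0 l1 u (deriv u) (deriv (deriv u)) y" for y
      by (simp add: L2_def algebra_simps)
    have KL: "\<bar>L2 l0 l1 f f' f'' y\<bar> \<le> K" if "y \<in> {a..b}" for y
      unfolding K_def by (rule supnorm_on_upper[OF cL that])
    have "0 \<le> K * Om x - c * (f x - u x)"
    proof (rule L2_maximum_principle[of a b "\<lambda>y. K * Om y - c * (f y - u y)"
          "\<lambda>y. K * deriv Om y - c * (f' y - deriv u y)"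
          "\<lambda>y. K * deriv (deriv Om) y - c * (f'' y - deriv (deriv u) y)" l0 l1, OF ab _ _ _ _ _ x])
      show "((\<lambda>y. K * Om y - c * (f y - u y)) has_real_derivative
          K * deriv Om y - c * (f' y - deriv u y)) (at y within {a..b})" if "y \<in> {a..b}" for y
        by (auto intro!: derivative_eq_intros fd1 that
            has_field_derivative_at_within[OF O(1)] has_field_derivative_at_within[OF U(1)])
      show "((\<lambda>y. K * deriv Om y - c * (f' y - deriv u y)) has_real_derivative
          K * deriv (deriv Om) y - c * (f'' y - deriv (deriv u) y)) (at y within {a..b})"
        if "y \<in> {a..b}" for y
        by (auto intro!: derivative_eq_intros fd2 that
            has_field_derivative_at_within[OF O(2)] has_field_derivative_at_within[OF U(2)])
      show "L2 l0 l1 (\<lambda>y. K * Om y - c * (f y - u y)) (\<lambda>y. K * deriv Om y - c * (f' y - deriv u y))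
          (\<lambda>y. K * deriv (deriv Om) y - c * (f'' y - deriv (deriv u) y)) y \<le> 0"
        if "y \<in> {a..b}" for y
        using KL[OF that] c by (auto simp: L O(3) U(3) abs_le_iff)
    qed (use Om ua ub in \<open>simp_all add: is_Omega_def\<close>)
    then show ?thesis
      by simp
  qed
  have "\<bar>f x - u x\<bar> \<le> K * Om x"
    using signed[of 1] signed[of "-1"] by auto
  also have "\<dots> \<le> K * Mconst a b l0 l1"
  proof (rule mult_left_mono)
    show "Om x \<le> Mconst a b l0 l1"
      unfolding Mconst_def Om_def
      by (rule abs_le_D1, rule supnorm_on_upper[OF continuous_on_Omega[OF ab] x])
    show "0 \<le> K"
      unfolding K_def using ab by (intro supnorm_on_nonneg cL) simp
  qed
  finally show ?thesis
    by (simp add: K_def mult.commute)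
qed

lemma partition_mono:
  fixes t :: "nat \<Rightarrow> 'a :: linorder"
  assumes "\<And>j. 1 \<le> j \<Longrightarrow> j < n \<Longrightarrow> t j \<le> t (Suc j)"
    and "1 \<le> i" "i \<le> k" "k \<le> n"
  shows "t i \<le> t k"
  using assms(3,4)
proof (induction k rule: dec_induct)
  case (step m)
  then have "t i \<le> t m"
    by simp
  also have "t m \<le> t (Suc m)"
    using assms(1,2) step by simp
  finally show ?case .
qed simp

lemma partition_cover:
  fixes t :: "nat \<Rightarrow> 'a :: linorder"
  assumes "2 \<le> n" "\<And>j. 1 \<le> j \<Longrightarrow> j < n \<Longrightarrow> t j \<le> t (Suc j)" "x \<in> {t 1..t n}"
  shows "\<exists>j. 1 \<le> j \<and> j < n \<and> x \<in> {t j..t (Suc j)}"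
  using assms
proof (induction n rule: nat_induct_at_least)
  case base
  then show ?case
    by (intro exI[of _ 1]) (auto simp: numeral_2_eq_2)
next
  case (Suc n)
  show ?case
  proof (cases "x \<le> t n")
    case True
    then obtain j where "1 \<le> j \<and> j < n \<and> x \<in> {t j..t (Suc j)}"
      using Suc by fastforce
    then show ?thesis
      by (intro exI[of _ j]) auto
  next
    case False
    then have "x \<in> {t n..t (Suc n)}"
      using Suc.prems(2) by simp
    then show ?thesis
      using Suc.hyps by (intro exI[of _ n]) auto
  qed
qed

lemma mult_le_Max_mult_Max:
  fixes M K :: "'a \<Rightarrow> 'b :: linordered_semiring"
  assumes "finite A" "j \<in> A" "0 \<le> M j" "0 \<le> K j"
  shows "M j * K j \<le> Max (M ` A) * Max (K ` A)"
proof -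
  have "M j \<le> Max (M ` A)" "K j \<le> Max (K ` A)"
    using assms(1,2) by (auto intro!: Max_ge)
  then show ?thesis
    using assms(3,4) by (auto intro!: mult_mono)
qed

theorem mainTheorem8:
  fixes n :: nat and t :: "nat \<Rightarrow> real" and lam0 lam1 :: "nat \<Rightarrow> real"
    and f f' f'' g :: "real \<Rightarrow> real"
  assumes n2: "n \<ge> 2"
    and t_mono: "\<And>j. 1 \<le> j \<Longrightarrow> j < n \<Longrightarrow> t j < t (Suc j)"
    and lam_le: "\<And>j. 1 \<le> j \<Longrightarrow> j < n \<Longrightarrow> lam0 j \<le> lam1 j"
    and f_d1: "\<And>x. x \<in> {t 1..t n} \<Longrightarrow> (f has_real_derivative f' x) (at x within {t 1..t n})"
    and f_d2: "\<And>x. x \<in> {t 1..t n} \<Longrightarrow> (f' has_real_derivative f'' x) (at x within {t 1..t n})"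
    and f_C2: "continuous_on {t 1..t n} f''"
    and g_cont: "continuous_on {t 1..t n} g"
    and g_piece: "\<And>j. 1 \<le> j \<Longrightarrow> j < n \<Longrightarrow>
                   \<exists>u \<in> Espace [lam0 j, lam1 j]. \<forall>x \<in> {t j..t (Suc j)}. g x = u x"
    and g_interp: "\<And>j. 1 \<le> j \<Longrightarrow> j \<le> n \<Longrightarrow> g (t j) = f (t j)"
  shows "supnorm_on (t 1) (t n) (\<lambda>x. f x - g x)
     \<le> Max ((\<lambda>j. Mconst (t j) (t (Suc j)) (lam0 j) (lam1 j)) ` {1..n-1})
       * Max ((\<lambda>j. supnorm_on (t j) (t (Suc j)) (L2 (lam0 j) (lam1 j) f f' f'')) ` {1..n-1})"
    (is "_ \<le> Max (?M ` _) * Max (?K ` _)")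
proof -
  have t_le: "t j \<le> t (Suc j)" if "1 \<le> j" "j < n" for j
    using t_mono[OF that] by simp
  have "\<bar>f x - g x\<bar> \<le> Max (?M ` {1..n-1}) * Max (?K ` {1..n-1})" if x: "x \<in> {t 1..t n}" for x
  proof -
    obtain j where j: "1 \<le> j" "j < n" "x \<in> {t j..t (Suc j)}"
      using partition_cover[OF n2 t_le x] by blast
    have ab: "t j < t (Suc j)"
      using t_mono j by simp
    have sub: "{t j..t (Suc j)} \<subseteq> {t 1..t n}"
      using partition_mono[of n t 1 j] partition_mono[of n t "Suc j" n] t_le j by auto
    obtain u where u: "u \<in> Espace [lam0 j, lam1 j]" and gu: "\<forall>y\<in>{t j..t (Suc j)}. g y = u y"
      using g_piece j by blast
    have "\<bar>f x - g x\<bar> = \<bar>f x - u x\<bar>"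
      using gu j(3) by simp
    also have "\<dots> \<le> ?M j * ?K j"
      by (rule interpolation_error_le_Mconst[OF ab sub f_d1 f_d2 f_C2 u _ _ j(3)])
        (use gu g_interp[of j] g_interp[of "Suc j"] j ab in auto)
    also have "\<dots> \<le> Max (?M ` {1..n-1}) * Max (?K ` {1..n-1})"
      using j ab Mconst_nonneg[OF ab] continuous_on_subset[OF continuous_on_L2[OF f_d1 f_d2 f_C2] sub]
      by (intro mult_le_Max_mult_Max supnorm_on_nonneg) auto
    finally show ?thesis .
  qed
  then show ?thesis
    using partition_mono[of n t 1 n] t_le n2 by (intro supnorm_on_least) auto
qed

end
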